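(* Let $c$ be a real number with $0<c\leq 1/2$. Let $\mathcal{A}$ be the set of all sequences $\mathbf{a}=(a_p)$ indexed by the primes $p$ with $a_p\in\{0,1,\dots,p-1\}$, equipped with the product probability measure under which the $a_p$ are independent and each $a_p$ is uniformly distributed on $\{0,\dots,p-1\}$; write $\mathbf{E}$ for expectation with respect to this measure. For real numbers $1\leq X<Y$ and $\mathbf{a}\in\mathcal{A}$, let $$\Omega_{X,Y}(\mathbf{a})=\Bigl\{x\in[0,1]\,:\,\Bigl|x-\frac{a_p}{p}\Bigr|>\frac{c}{p}\text{ for every prime } p \text{ with } X<p\leq Y\Bigr\},$$ and let $$H_{X,Y}=\sum_{\substack{p \text{ prime}\\ X<p\leq Y}}\frac{1}{p}.$$ Then there is a constant $C\geq 0$ depending only on $c$ such that for all real $1\leq X<Y$, $$\mathbf{E}\bigl(\lambda(\Omega_{X,Y})\bigr)\leq \frac{C}{H_{X,Y}}$$ (whenever $H_{X,Y}>0$), where $\lambda$ denotes Lebesgue measure.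
   Context: The paper writes the conclusion as $\mathbf{E}(\lambda(\Omega_{X,Y}))\ll 1/H_{X,Y}$ with implied constant depending only on $c$; this is what the stated inequality means. *)

theory Defs
  imports "HOL-Probability.Probability"
begin

definition seq_space :: "(nat \<Rightarrow> nat) measure" where
  "seq_space = PiM {p. prime p} (\<lambda>p. measure_pmf (pmf_of_set {0..<p}))"

definition Omega :: "real \<Rightarrow> real \<Rightarrow> real \<Rightarrow> (nat \<Rightarrow> nat) \<Rightarrow> real set" where
  "Omega c X Y a = {x \<in> {0..1}. \<forall>p. prime p \<and> X < real p \<and> real p \<le> Y \<longrightarrow>
       \<bar>x - real (a p) / real p\<bar> > c / real p}"

definition H :: "real \<Rightarrow> real \<Rightarrow> real" where
  "H X Y = (\<Sum>p\<in>{p::nat. prime p \<and> X < real p \<and> real p \<le> Y}. 1 / real p)"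

end

theory Submission
  imports Defs
begin

(* For x in frac_below c p, i.e. frac (p x) < c, the single residue a_p = floor (p x) already
   puts x outside Omega, so by independence the probability that x lies in Omega is at most
   prod_p (1 - [x in frac_below c p] / p) <= 1 / (1 + S x), where S = frac_weight c J and J is
   the set of primes in (X, Y]. By Tonelli, the expected measure of Omega is the integral of
   this probability over [0,1).
   On [0,1), S has mean mu = c H. Since multiplication by q permutes the residues modulo p,
   for distinct primes p, q the sets frac_below c p and frac_below c q are nearly
   independent: their intersection has measure at most c^2 + c/p. Hence S has variance at
   most c P (H + 1), where P = sum_p 1/p^2 <= 1. Integrating the Chebyshev-type bound
   1/(1 + s) <= 4 (s - mu)^2 / mu^2 + 2 / mu gives E <= 4 (H + 1) / (c H^2) + 2 / (c H),
   which is at most 10 / (c H) when H >= 1; for H < 1 the trivial bound E <= 1 suffices. *)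

section \<open>The sets of x with frac (p x) < c\<close>

lemma card_int_interval_le:
  fixes a L :: real
  assumes "0 \<le> L"
  shows "real (card {k::int. a \<le> k \<and> k < a + L}) \<le> L + 1"
proof -
  have "{k::int. a \<le> k \<and> k < a + L} = {\<lceil>a\<rceil>..<\<lceil>a + L\<rceil>}"
    by (auto simp: ceiling_le_iff less_ceiling_iff)
  then have "card {k::int. a \<le> k \<and> k < a + L} = nat (\<lceil>a + L\<rceil> - \<lceil>a\<rceil>)"
    by simp
  moreover have "real_of_int (\<lceil>a + L\<rceil> - \<lceil>a\<rceil>) \<le> L + 1"
    by linarith
  ultimately show ?thesis
    using assms by (cases "0 \<le> \<lceil>a + L\<rceil> - \<lceil>a\<rceil>") auto
qed

lemma card_coprime_frac_less_le:
  fixes p q :: nat and t c :: real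
  assumes p: "p > 0" and "coprime p q" and c: "0 \<le> c"
  shows "real (card {j\<in>{..<p}. frac (real q * ((real j + t) / real p)) < c}) \<le> c * p + 1"
proof -
  let ?S = "{j\<in>{..<p}. frac (real q * ((real j + t) / real p)) < c}"
  let ?K = "{k::int. - (real q * t) \<le> k \<and> k < - (real q * t) + c * p}"
  \<comment> \<open>n j = p frac (q (j + t) / p) - q t is an integer, injective in j by coprimality,
     and lies in an interval of length c p whenever j is counted.\<close>
  define n :: "nat \<Rightarrow> int" where
    "n j = int q * int j - int p * \<lfloor>real q * ((real j + t) / real p)\<rfloor>" for j
  have n_eq: "real_of_int (n j) = real p * frac (real q * ((real j + t) / real p)) - real q * t" for j
    using p unfolding n_def frac_def by (simp add: field_simps)
  have "inj_on n {..<p}"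
  proof (rule inj_onI)
    fix i j assume ij: "i \<in> {..<p}" "j \<in> {..<p}" "n i = n j"
    then have "int q * (int i - int j) = int p * (\<lfloor>real q * ((real i + t) / real p)\<rfloor> - \<lfloor>real q * ((real j + t) / real p)\<rfloor>)"
      unfolding n_def by (simp add: algebra_simps)
    then have "int p dvd int q * (int i - int j)"
      by (metis dvd_triv_left)
    then have "int p dvd int i - int j"
      using \<open>coprime p q\<close> by (simp add: coprime_dvd_mult_right_iff)
    moreover have "\<bar>int i - int j\<bar> < int p"
      using ij by auto
    ultimately have "int i - int j = 0"
      by (metis abs_of_nat dvd_imp_le_int not_le)
    then show "i = j"
      by simp
  qed
  moreover have "n ` ?S \<subseteq> ?K"
    using p by (auto simp: n_eq mult.commute)
  moreover have "finite ?K"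
    by (rule finite_subset[of _ "{\<lfloor>- (real q * t)\<rfloor>..\<lceil>- (real q * t) + c * p\<rceil>}"]) (auto, linarith+)
  ultimately have "card ?S \<le> card ?K"
    by (metis (no_types, lifting) card_image card_mono inj_on_subset mem_Collect_eq subsetI)
  then show ?thesis
    using card_int_interval_le[of "c * p" "- (real q * t)"] c by simp
qed

definition frac_below :: "real \<Rightarrow> nat \<Rightarrow> real set" where
  "frac_below c p = {x. frac (real p * x) < c}"

lemma frac_below_borel [measurable]: "frac_below c p \<in> sets borel"
proof -
  have "(\<lambda>x. frac (real p * x)) \<in> borel_measurable borel"
    unfolding frac_def by measurable
  then show ?thesis
    unfolding frac_below_def by measurable
qed

lemma mem_frac_below_shift:
  assumes "p > 0" "0 \<le> t" "t < 1"
  shows "(real j + t) / real p \<in> frac_below c p \<longleftrightarrow> t < c"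
proof -
  have "frac (real j + t) = t"
    using assms by (metis add.commute frac_add_of_int_right frac_eq of_int_of_nat_eq)
  then show ?thesis
    using assms by (simp add: frac_below_def)
qed

lemma nn_integral_unit_interval_split:
  fixes f :: "real \<Rightarrow> ennreal"
  assumes p: "p > 0" and f [measurable]: "f \<in> borel_measurable borel"
  shows "(\<integral>\<^sup>+x. indicator {0..<1} x * f x \<partial>lborel) =
    ennreal (1 / real p) * (\<integral>\<^sup>+t. indicator {0..<1} t * (\<Sum>j<p. f ((real j + t) / real p)) \<partial>lborel)"
proof -
  define I where "I j = {x. \<lfloor>real p * x\<rfloor> = int j}" for j
  have I_borel [measurable]: "I j \<in> sets borel" for j
    unfolding I_def by measurable
  have "x \<in> {0..<1} \<longleftrightarrow> (\<exists>j<p. x \<in> I j)" for x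
  proof -
    have "x \<in> {0..<1} \<longleftrightarrow> 0 \<le> \<lfloor>real p * x\<rfloor> \<and> \<lfloor>real p * x\<rfloor> < int p"
      using p by (auto simp: floor_less_iff zero_le_mult_iff)
    also have "\<dots> \<longleftrightarrow> (\<exists>j<p. x \<in> I j)"
      unfolding I_def by (metis (mono_tags) mem_Collect_eq nat_less_iff of_nat_0_le_iff of_nat_less_iff zero_le_imp_eq_int)
    finally show ?thesis .
  qed
  then have "{0..<1} = (\<Union>j<p. I j)"
    by (auto simp del: atLeastLessThan_iff)
  moreover have "disjoint_family_on I {..<p}"
    by (auto simp: disjoint_family_on_def I_def)
  ultimately have partition: "indicator {0..<1} x = (\<Sum>j<p. indicator (I j) x :: ennreal)" for x
    by (simp add: indicator_UN_disjoint)
  have piece: "(\<integral>\<^sup>+x. indicator (I j) x * f x \<partial>lborel) =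
      ennreal (1 / real p) * (\<integral>\<^sup>+t. indicator {0..<1} t * f ((real j + t) / real p) \<partial>lborel)" for j
  proof -
    have "real j / real p + 1 / real p * t \<in> I j \<longleftrightarrow> t \<in> {0..<1}" for t
      using p by (simp add: I_def field_simps floor_eq_iff zero_le_mult_iff)
    moreover have "real j / real p + 1 / real p * t = (real j + t) / real p" for t
      by (simp add: add_divide_distrib)
    ultimately show ?thesis
      using p by (subst nn_integral_real_affine[where c = "1 / real p" and t = "real j / real p"])
        (auto simp: indicator_def)
  qed
  have "(\<integral>\<^sup>+x. indicator {0..<1} x * f x \<partial>lborel) = (\<integral>\<^sup>+x. (\<Sum>j<p. indicator (I j) x * f x) \<partial>lborel)"
    by (simp only: partition sum_distrib_right)
  also have "\<dots> = (\<Sum>j<p. \<integral>\<^sup>+x. indicator (I j) x * f x \<partial>lborel)"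
    by (rule nn_integral_sum) simp
  also have "\<dots> = ennreal (1 / real p) *
      (\<Sum>j<p. \<integral>\<^sup>+t. indicator {0..<1} t * f ((real j + t) / real p) \<partial>lborel)"
    by (simp add: piece sum_distrib_left)
  also have "\<dots> = ennreal (1 / real p) *
      (\<integral>\<^sup>+t. indicator {0..<1} t * (\<Sum>j<p. f ((real j + t) / real p)) \<partial>lborel)"
    by (subst nn_integral_sum[symmetric]) (simp_all add: sum_distrib_left)
  finally show ?thesis .
qed

lemma emeasure_frac_below_Int:
  assumes p: "p > 0" and c: "c \<le> 1" and B [measurable]: "B \<in> sets borel"
  shows "emeasure lborel ({0..<1} \<inter> frac_below c p \<inter> B) = ennreal (1 / real p) *
    (\<integral>\<^sup>+t. indicator {0..<c} t * of_nat (card {j\<in>{..<p}. (real j + t) / real p \<in> B}) \<partial>lborel)"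
proof -
  have shift: "indicator {0..<1} t * (\<Sum>j<p. indicator (frac_below c p \<inter> B) ((real j + t) / real p)) =
      (indicator {0..<c} t * of_nat (card {j\<in>{..<p}. (real j + t) / real p \<in> B}) :: ennreal)" for t
    using c mem_frac_below_shift[OF p, of t _ c]
    by (auto simp: indicator_def sum.If_cases Int_def)
  have "emeasure lborel ({0..<1} \<inter> frac_below c p \<inter> B) =
      (\<integral>\<^sup>+x. indicator {0..<1} x * indicator (frac_below c p \<inter> B) x \<partial>lborel)"
    by (simp add: Int_assoc indicator_inter_arith flip: nn_integral_indicator)
  also have "\<dots> = ennreal (1 / real p) * (\<integral>\<^sup>+t. indicator {0..<1} t *
      (\<Sum>j<p. indicator (frac_below c p \<inter> B) ((real j + t) / real p)) \<partial>lborel)"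
    using p by (rule nn_integral_unit_interval_split) simp
  finally show ?thesis
    by (simp only: shift)
qed

lemma measure_frac_below:
  assumes "p > 0" "0 \<le> c" "c \<le> 1"
  shows "measure lborel ({0..<1} \<inter> frac_below c p) = c"
proof -
  have "emeasure lborel ({0..<1} \<inter> frac_below c p) = ennreal (1 / real p) *
      (\<integral>\<^sup>+t. of_nat p * indicator {0..<c} t \<partial>lborel)"
    using emeasure_frac_below_Int[OF assms(1,3), of UNIV] by (simp add: mult.commute)
  also have "\<dots> = ennreal c"
    using assms by (simp add: nn_integral_cmult_indicator ennreal_of_nat_eq_real_of_nat
        flip: ennreal_mult')
  finally show ?thesis
    using assms(2) by (simp add: measure_def)
qed

lemma measure_frac_below_Int_coprime_le:
  assumes p: "p > 0" and c: "0 \<le> c" "c \<le> 1" and "coprime p q"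
  shows "measure lborel ({0..<1} \<inter> frac_below c p \<inter> frac_below c q) \<le> c\<^sup>2 + c / real p"
proof -
  have count: "of_nat (card {j\<in>{..<p}. (real j + t) / real p \<in> frac_below c q}) \<le> ennreal (c * p + 1)" for t
    using card_coprime_frac_less_le[OF p \<open>coprime p q\<close> c(1), of t]
    by (simp add: frac_below_def ennreal_of_nat_eq_real_of_nat ennreal_leI)
  have "emeasure lborel ({0..<1} \<inter> frac_below c p \<inter> frac_below c q) \<le>
      ennreal (1 / real p) * (\<integral>\<^sup>+t. indicator {0..<c} t * ennreal (c * p + 1) \<partial>lborel)"
    unfolding emeasure_frac_below_Int[OF p c(2) frac_below_borel]
    by (intro mult_left_mono[OF nn_integral_mono] mult_left_mono[OF count]) simp_all
  also have "\<dots> = ennreal (1 / real p) * (ennreal (c * p + 1) * ennreal c)"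
    using c by (simp add: mult.commute[of "indicator _ _"] nn_integral_cmult_indicator)
  also have "\<dots> = ennreal (1 / real p * ((c * p + 1) * c))"
    using c by (simp only: ennreal_mult[symmetric] mult_nonneg_nonneg add_nonneg_nonneg
        divide_nonneg_nonneg of_nat_0_le_iff zero_le_one)
  also have "1 / real p * ((c * p + 1) * c) = c\<^sup>2 + c / real p"
    using p by (simp add: field_simps power2_eq_square)
  finally show ?thesis
    using c by (simp add: measure_def enn2real_leI)
qed

section \<open>Mean and variance of the weight function\<close>

lemma has_bochner_integral_indicator_unit_interval:
  assumes "A \<in> sets borel"
  shows "has_bochner_integral lborel (indicator ({0..<1} \<inter> A)) (measure lborel ({0..<1::real} \<inter> A))"
proof (rule has_bochner_integral_real_indicator)
  have "emeasure lborel ({0..<1} \<inter> A) \<le> emeasure lborel {0..<1::real}"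
    by (rule emeasure_mono) auto
  then show "emeasure lborel ({0..<1} \<inter> A) < \<infinity>"
    by (simp add: le_less_trans)
qed (use assms in simp)

definition frac_weight :: "real \<Rightarrow> nat set \<Rightarrow> real \<Rightarrow> real" where
  "frac_weight c J x = (\<Sum>p\<in>J. indicator (frac_below c p) x / real p)"

lemma frac_weight_nonneg: "0 \<le> frac_weight c J x"
  unfolding frac_weight_def by (simp add: sum_nonneg)

lemma has_bochner_integral_frac_weight:
  assumes "\<And>p. p \<in> J \<Longrightarrow> p > 0" and "0 \<le> c" "c \<le> 1"
  shows "has_bochner_integral lborel (\<lambda>x. indicator {0..<1} x * frac_weight c J x) (c * (\<Sum>p\<in>J. 1 / real p))"
proof -
  have "(\<lambda>x. indicator {0..<1} x * frac_weight c J x) =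
      (\<lambda>x. \<Sum>p\<in>J. indicator ({0..<1} \<inter> frac_below c p) x / real p)"
    by (simp add: frac_weight_def sum_distrib_left indicator_inter_arith)
  moreover have "has_bochner_integral lborel (\<lambda>x. \<Sum>p\<in>J. indicator ({0..<1} \<inter> frac_below c p) x / real p)
      (\<Sum>p\<in>J. measure lborel ({0..<1} \<inter> frac_below c p) / real p)"
    by (intro has_bochner_integral_sum has_bochner_integral_divide_zero
        has_bochner_integral_indicator_unit_interval) simp
  moreover have "(\<Sum>p\<in>J. measure lborel ({0..<1} \<inter> frac_below c p) / real p) = c * (\<Sum>p\<in>J. 1 / real p)"
    using assms by (simp add: measure_frac_below sum_distrib_left)
  ultimately show ?thesis
    by simp
qed

lemma has_bochner_integral_frac_weight_sq:
  "has_bochner_integral lborel (\<lambda>x. indicator {0..<1} x * (frac_weight c J x)\<^sup>2)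
     (\<Sum>p\<in>J. \<Sum>q\<in>J. measure lborel ({0..<1} \<inter> frac_below c p \<inter> frac_below c q) / (real p * real q))"
proof -
  have "(\<lambda>x. indicator {0..<1} x * (frac_weight c J x)\<^sup>2) =
      (\<lambda>x. \<Sum>p\<in>J. \<Sum>q\<in>J. indicator ({0..<1} \<inter> (frac_below c p \<inter> frac_below c q)) x / (real p * real q))"
    by (simp add: frac_weight_def power2_eq_square sum_product sum_distrib_left indicator_inter_arith
        ac_simps)
  moreover have "has_bochner_integral lborel
      (\<lambda>x. \<Sum>p\<in>J. \<Sum>q\<in>J. indicator ({0..<1} \<inter> (frac_below c p \<inter> frac_below c q)) x / (real p * real q))
      (\<Sum>p\<in>J. \<Sum>q\<in>J. measure lborel ({0..<1} \<inter> (frac_below c p \<inter> frac_below c q)) / (real p * real q))"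
    by (intro has_bochner_integral_sum has_bochner_integral_divide_zero
        has_bochner_integral_indicator_unit_interval) simp
  ultimately show ?thesis
    by (simp add: Int_assoc)
qed

lemma sum_measure_frac_below_pairs_le:
  fixes J :: "nat set"
  assumes J: "finite J" "\<And>p. p \<in> J \<Longrightarrow> prime p" and c: "0 \<le> c" "c \<le> 1"
  shows "(\<Sum>p\<in>J. \<Sum>q\<in>J. measure lborel ({0..<1} \<inter> frac_below c p \<inter> frac_below c q) / (real p * real q))
    \<le> (c * (\<Sum>p\<in>J. 1 / real p))\<^sup>2 + c * (\<Sum>p\<in>J. 1 / (real p)\<^sup>2) * ((\<Sum>p\<in>J. 1 / real p) + 1)"
proof -
  have pos: "p > 0" if "p \<in> J" for p
    using J(2)[OF that] by (simp add: prime_gt_0_nat)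
  have pair: "measure lborel ({0..<1} \<inter> frac_below c p \<inter> frac_below c q) / (real p * real q)
      \<le> c\<^sup>2 * (1 / real p * (1 / real q)) + c * (1 / (real p)\<^sup>2 * (1 / real q))
        + (if p = q then c / (real p)\<^sup>2 else 0)" if "p \<in> J" "q \<in> J" for p q
  proof (cases "p = q")
    case True
    then show ?thesis
      using measure_frac_below[OF pos[OF that(1)] c] c by (simp add: power2_eq_square)
  next
    case False
    then have "coprime p q"
      using J(2) that by (simp add: primes_coprime)
    then have "measure lborel ({0..<1} \<inter> frac_below c p \<inter> frac_below c q) \<le> c\<^sup>2 + c / real p"
      using measure_frac_below_Int_coprime_le pos that c by blast
    then have "measure lborel ({0..<1} \<inter> frac_below c p \<inter> frac_below c q) / (real p * real q)
        \<le> (c\<^sup>2 + c / real p) / (real p * real q)"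
      by (rule divide_right_mono) simp
    also have "\<dots> = c\<^sup>2 * (1 / real p * (1 / real q)) + c * (1 / (real p)\<^sup>2 * (1 / real q))"
      using pos that by (simp add: field_simps power2_eq_square)
    finally show ?thesis
      using False by simp
  qed
  have "(\<Sum>p\<in>J. \<Sum>q\<in>J. measure lborel ({0..<1} \<inter> frac_below c p \<inter> frac_below c q) / (real p * real q))
      \<le> (\<Sum>p\<in>J. \<Sum>q\<in>J. c\<^sup>2 * (1 / real p * (1 / real q)) + c * (1 / (real p)\<^sup>2 * (1 / real q))
          + (if p = q then c / (real p)\<^sup>2 else 0))"
    by (intro sum_mono pair)
  also have "\<dots> = (\<Sum>p\<in>J. \<Sum>q\<in>J. c\<^sup>2 * (1 / real p * (1 / real q)))
      + (\<Sum>p\<in>J. \<Sum>q\<in>J. c * (1 / (real p)\<^sup>2 * (1 / real q))) + (\<Sum>p\<in>J. c * (1 / (real p)\<^sup>2))"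
    using J(1) by (simp add: sum.distrib)
  also have "\<dots> = (c * (\<Sum>p\<in>J. 1 / real p))\<^sup>2 + c * (\<Sum>p\<in>J. 1 / (real p)\<^sup>2) * ((\<Sum>p\<in>J. 1 / real p) + 1)"
    unfolding sum_distrib_left[symmetric] sum_distrib_right[symmetric]
    by (simp add: power2_eq_square algebra_simps)
  finally show ?thesis .
qed

lemma frac_weight_variance_le:
  assumes J: "finite J" "\<And>p. p \<in> J \<Longrightarrow> prime p" and c: "0 \<le> c" "c \<le> 1"
  defines "\<mu> \<equiv> c * (\<Sum>p\<in>J. 1 / real p)"
  shows "integrable lborel (\<lambda>x. indicator {0..<1} x * (frac_weight c J x - \<mu>)\<^sup>2)"
    and "(\<integral>x. indicator {0..<1} x * (frac_weight c J x - \<mu>)\<^sup>2 \<partial>lborel)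
      \<le> c * (\<Sum>p\<in>J. 1 / (real p)\<^sup>2) * ((\<Sum>p\<in>J. 1 / real p) + 1)"
proof -
  define V where "V = (\<Sum>p\<in>J. \<Sum>q\<in>J.
    measure lborel ({0..<1} \<inter> frac_below c p \<inter> frac_below c q) / (real p * real q))"
  have pos: "p > 0" if "p \<in> J" for p
    using J(2)[OF that] by (simp add: prime_gt_0_nat)
  have "has_bochner_integral lborel (indicator {0..<1::real} :: real \<Rightarrow> real) 1"
    using has_bochner_integral_indicator_unit_interval[of UNIV] by simp
  then have "has_bochner_integral lborel (\<lambda>x. indicator {0..<1} x * (frac_weight c J x)\<^sup>2
      - 2 * \<mu> * (indicator {0..<1} x * frac_weight c J x) + \<mu>\<^sup>2 * indicator {0..<1} x)
      (V - 2 * \<mu> * \<mu> + \<mu>\<^sup>2 * 1)"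
    unfolding V_def \<mu>_def
    by (intro has_bochner_integral_add has_bochner_integral_diff has_bochner_integral_mult_right
        has_bochner_integral_frac_weight_sq has_bochner_integral_frac_weight pos c)
  moreover have "indicator {0..<1} x * (frac_weight c J x)\<^sup>2 - 2 * \<mu> * (indicator {0..<1} x * frac_weight c J x)
      + \<mu>\<^sup>2 * indicator {0..<1} x = indicator {0..<1} x * (frac_weight c J x - \<mu>)\<^sup>2" for x
    by (simp add: power2_diff algebra_simps)
  ultimately have integral: "has_bochner_integral lborel
      (\<lambda>x. indicator {0..<1} x * (frac_weight c J x - \<mu>)\<^sup>2) (V - \<mu>\<^sup>2)"
    by (simp add: power2_eq_square)
  then show "integrable lborel (\<lambda>x. indicator {0..<1} x * (frac_weight c J x - \<mu>)\<^sup>2)"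
    by (rule integrable.intros)
  have "V - \<mu>\<^sup>2 \<le> c * (\<Sum>p\<in>J. 1 / (real p)\<^sup>2) * ((\<Sum>p\<in>J. 1 / real p) + 1)"
    using sum_measure_frac_below_pairs_le[OF J c] unfolding V_def \<mu>_def by linarith
  then show "(\<integral>x. indicator {0..<1} x * (frac_weight c J x - \<mu>)\<^sup>2 \<partial>lborel)
      \<le> c * (\<Sum>p\<in>J. 1 / (real p)\<^sup>2) * ((\<Sum>p\<in>J. 1 / real p) + 1)"
    using has_bochner_integral_integral_eq[OF integral] by simp
qed

lemma prod_one_minus_le_inverse_one_plus_sum:
  fixes t :: "'a \<Rightarrow> real"
  assumes "finite J" "\<And>p. p \<in> J \<Longrightarrow> 0 \<le> t p \<and> t p \<le> 1"
  shows "(\<Prod>p\<in>J. 1 - t p) \<le> 1 / (1 + (\<Sum>p\<in>J. t p))"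
  using assms
proof (induction J rule: finite_induct)
  case (insert a F)
  define T where "T = (\<Sum>p\<in>F. t p)"
  have T: "0 \<le> T"
    unfolding T_def using insert by (auto intro: sum_nonneg)
  have a: "0 \<le> t a" "t a \<le> 1"
    using insert by auto
  have "(\<Prod>p\<in>insert a F. 1 - t p) = (1 - t a) * (\<Prod>p\<in>F. 1 - t p)"
    using insert by simp
  also have "\<dots> \<le> (1 - t a) * (1 / (1 + T))"
    using insert a unfolding T_def by (intro mult_left_mono) auto
  also have "\<dots> \<le> 1 / (1 + (t a + T))"
    using a T by (simp add: field_simps)
  finally show ?case
    using insert unfolding T_def by simp
qed simp

lemma inverse_one_plus_le_deviation:
  fixes s \<mu> :: real
  assumes "0 \<le> s" "0 < \<mu>"
  shows "1 / (1 + s) \<le> 4 * (s - \<mu>)\<^sup>2 / \<mu>\<^sup>2 + 2 / \<mu>"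
proof (cases "s \<le> \<mu> / 2")
  case True
  then have "(\<mu> / 2)\<^sup>2 \<le> (\<mu> - s)\<^sup>2"
    using assms by (intro power_mono) auto
  then have "1 \<le> 4 * (s - \<mu>)\<^sup>2 / \<mu>\<^sup>2"
    using assms by (simp add: field_simps power2_commute)
  moreover have "1 / (1 + s) \<le> 1" "0 \<le> 2 / \<mu>"
    using assms by auto
  ultimately show ?thesis
    by linarith
next
  case False
  then have "1 / (1 + s) \<le> 2 / \<mu>"
    using assms by (simp add: field_simps)
  moreover have "0 \<le> 4 * (s - \<mu>)\<^sup>2 / \<mu>\<^sup>2"
    by simp
  ultimately show ?thesis
    by linarith
qed

lemma sum_inverse_squares_le_1:
  assumes "finite J" "\<And>n. n \<in> J \<Longrightarrow> n \<ge> 2"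
  shows "(\<Sum>n\<in>J. 1 / (real n)\<^sup>2) \<le> 1"
proof -
  have telescope: "(\<Sum>n\<in>{2..N}. 1 / (real n)\<^sup>2) \<le> 1 - 1 / real N" if "N \<ge> 1" for N :: nat
    using that
  proof (induction N rule: dec_induct)
    case (step n)
    have "1 / (real (Suc n))\<^sup>2 \<le> 1 / (real n * real (Suc n))"
      using step by (intro divide_left_mono) (auto simp: power2_eq_square)
    also have "\<dots> = 1 / real n - 1 / real (Suc n)"
      using step by (simp add: field_simps)
    finally show ?case
      using step by (simp add: atLeastAtMostSuc_conv)
  qed simp
  define N where "N = Max (insert 1 J)"
  have "J \<subseteq> {2..N}" "N \<ge> 1"
    unfolding N_def using assms by auto
  then have "(\<Sum>n\<in>J. 1 / (real n)\<^sup>2) \<le> (\<Sum>n\<in>{2..N}. 1 / (real n)\<^sup>2)"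
    by (intro sum_mono2) auto
  also have "\<dots> \<le> 1 - 1 / real N"
    using telescope \<open>N \<ge> 1\<close> .
  also have "\<dots> \<le> 1"
    by simp
  finally show ?thesis .
qed

section \<open>The expected measure of Omega\<close>

lemma prob_space_seq_space: "prob_space seq_space"
  unfolding seq_space_def by (rule prob_space_PiM) (simp add: prob_space_measure_pmf)

lemma seq_space_component_measurable [measurable]: "(\<lambda>a. a p) \<in> seq_space \<rightarrow>\<^sub>M count_space UNIV"
proof (cases "prime p")
  case True
  then have "(\<lambda>a. a p) \<in> seq_space \<rightarrow>\<^sub>M measure_pmf (pmf_of_set {0..<p})"
    unfolding seq_space_def by (intro measurable_component_singleton) simp
  then show ?thesis
    by (simp add: measurable_cong_sets)
next
  case False
  then have "a p = undefined" if "a \<in> space seq_space" for a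
    using that by (simp add: seq_space_def space_PiM PiE_def extensional_def)
  then show ?thesis
    by (rule measurable_cong[THEN iffD2, OF _ measurable_const]) auto
qed

lemma Omega_pair_measurable:
  "{w \<in> space (seq_space \<Otimes>\<^sub>M lborel). snd w \<in> Omega c X Y (fst w)} \<in> sets (seq_space \<Otimes>\<^sub>M lborel)"
  unfolding Omega_def mem_Collect_eq by measurable

lemma vimage_Pair_Omega:
  assumes "a \<in> space seq_space"
  shows "Pair a -` {w \<in> space (seq_space \<Otimes>\<^sub>M lborel). snd w \<in> Omega c X Y (fst w)} = Omega c X Y a"
  using assms by (auto simp: space_pair_measure)

lemma emeasure_Omega_measurable: "(\<lambda>a. emeasure lborel (Omega c X Y a)) \<in> borel_measurable seq_space"
  by (rule measurable_cong[THEN iffD1, OF _ lborel.measurable_emeasure_Pair[OF Omega_pair_measurable[of c X Y]]])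
    (simp only: vimage_Pair_Omega)

lemma emeasure_Omega_le_1: "emeasure lborel (Omega c X Y a) \<le> 1"
proof -
  have "emeasure lborel (Omega c X Y a) \<le> emeasure lborel {0..1::real}"
    by (rule emeasure_mono) (auto simp: Omega_def)
  then show ?thesis
    by simp
qed

lemma measure_Omega_le_1: "measure lborel (Omega c X Y a) \<le> 1"
  unfolding measure_def using emeasure_Omega_le_1 by (intro enn2real_leI) simp_all

lemma integrable_measure_Omega: "integrable seq_space (\<lambda>a. measure lborel (Omega c X Y a))"
proof -
  interpret prob_space seq_space
    by (rule prob_space_seq_space)
  have "(\<lambda>a. measure lborel (Omega c X Y a)) \<in> borel_measurable seq_space"
    unfolding measure_def using emeasure_Omega_measurable by measurable
  then show ?thesis
    by (intro integrable_const_bound[where B = 1]) (simp_all add: measure_Omega_le_1)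
qed

lemma integral_measure_Omega_le_1: "(\<integral>a. measure lborel (Omega c X Y a) \<partial>seq_space) \<le> 1"
proof -
  interpret prob_space seq_space
    by (rule prob_space_seq_space)
  show ?thesis
    by (rule integral_le_const[OF integrable_measure_Omega]) (simp add: measure_Omega_le_1)
qed

lemma nn_integral_emeasure_Omega:
  "(\<integral>\<^sup>+a. emeasure lborel (Omega c X Y a) \<partial>seq_space) =
    (\<integral>\<^sup>+x. emeasure seq_space {a \<in> space seq_space. x \<in> Omega c X Y a} \<partial>lborel)"
proof -
  interpret seq: prob_space seq_space
    by (rule prob_space_seq_space)
  interpret pair_sigma_finite seq_space lborel
    by (simp add: pair_sigma_finite_def seq.sigma_finite_measure_axioms lborel.sigma_finite_measure_axioms)
  define Q where "Q = {w \<in> space (seq_space \<Otimes>\<^sub>M lborel). snd w \<in> Omega c X Y (fst w)}"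
  have Q: "Q \<in> sets (seq_space \<Otimes>\<^sub>M lborel)"
    unfolding Q_def by (rule Omega_pair_measurable)
  have "(\<integral>\<^sup>+a. emeasure lborel (Omega c X Y a) \<partial>seq_space) = (\<integral>\<^sup>+a. emeasure lborel (Pair a -` Q) \<partial>seq_space)"
    unfolding Q_def by (intro nn_integral_cong) (simp only: vimage_Pair_Omega)
  also have "\<dots> = emeasure (seq_space \<Otimes>\<^sub>M lborel) Q"
    by (rule lborel.emeasure_pair_measure_alt[OF Q, symmetric])
  also have "\<dots> = (\<integral>\<^sup>+x. emeasure seq_space ((\<lambda>a. (a, x)) -` Q) \<partial>lborel)"
    by (rule emeasure_pair_measure_alt2[OF Q])
  also have "\<dots> = (\<integral>\<^sup>+x. emeasure seq_space {a \<in> space seq_space. x \<in> Omega c X Y a} \<partial>lborel)"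
    by (intro nn_integral_cong arg_cong2[where f = emeasure]) (auto simp: Q_def space_pair_measure)
  finally show ?thesis .
qed

definition primes_in :: "real \<Rightarrow> real \<Rightarrow> nat set" where
  "primes_in X Y = {p. prime p \<and> X < real p \<and> real p \<le> Y}"

lemma finite_primes_in: "finite (primes_in X Y)"
  by (rule finite_subset[of _ "{..nat \<lfloor>Y\<rfloor>}"]) (auto simp: primes_in_def le_nat_iff le_floor_iff)

lemma prob_uniform_far_le:
  fixes p :: nat and x c :: real
  assumes p: "p > 0" and x: "0 \<le> x" "x < 1"
  shows "measure_pmf.prob (pmf_of_set {0..<p}) {k. c / real p < \<bar>x - real k / real p\<bar>}
    \<le> 1 - indicator (frac_below c p) x / real p"
proof (cases "x \<in> frac_below c p")
  case True
  let ?A = "{k. c / real p < \<bar>x - real k / real p\<bar>}"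
  define k where "k = nat \<lfloor>real p * x\<rfloor>"
  have k: "real k = real_of_int \<lfloor>real p * x\<rfloor>"
    unfolding k_def using x p by simp
  moreover have "real p * x < real p"
    using x p by simp
  ultimately have "k < p"
    by (metis of_int_floor_le of_nat_less_iff order_le_less_trans)
  have "\<bar>x - real k / real p\<bar> = frac (real p * x) / real p"
    using p unfolding k frac_def by (simp add: field_simps)
  moreover have "frac (real p * x) / real p < c / real p"
    using True p by (simp add: frac_below_def divide_strict_right_mono)
  ultimately have "k \<notin> ?A"
    by simp
  then have "card ({0..<p} \<inter> ?A) \<le> card ({0..<p} - {k})"
    by (intro card_mono) auto
  also have "\<dots> = p - 1"
    using \<open>k < p\<close> by simp
  finally have "real (card ({0..<p} \<inter> ?A)) \<le> real p - 1"
    using p by linarith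
  then show ?thesis
    using True p by (simp add: measure_pmf_of_set divide_right_mono field_simps)
qed simp

lemma emeasure_mem_Omega_le:
  assumes x: "0 \<le> x" "x < 1"
  shows "emeasure seq_space {a \<in> space seq_space. x \<in> Omega c X Y a}
    \<le> ennreal (1 / (1 + frac_weight c (primes_in X Y) x))"
proof -
  let ?U = "\<lambda>p. measure_pmf (pmf_of_set {0..<p})"
  let ?far = "\<lambda>p. {k. c / real p < \<bar>x - real k / real p\<bar>}"
  interpret product_prob_space ?U "{p. prime p}"
    by (rule product_prob_spaceI) (rule prob_space_measure_pmf)
  have pos: "p > 0" if "p \<in> primes_in X Y" for p
    using that by (simp add: primes_in_def prime_gt_0_nat)
  have event: "{a \<in> space seq_space. x \<in> Omega c X Y a} =
      {a \<in> space (PiM {p. prime p} ?U). \<forall>p\<in>primes_in X Y. a p \<in> ?far p}"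
    using x by (auto simp: seq_space_def Omega_def primes_in_def)
  have "emeasure seq_space {a \<in> space seq_space. x \<in> Omega c X Y a} =
      (\<Prod>p\<in>primes_in X Y. emeasure (?U p) (?far p))"
    unfolding event unfolding seq_space_def
    by (rule emeasure_PiM_Collect) (use finite_primes_in in \<open>auto simp: primes_in_def\<close>)
  also have "\<dots> = ennreal (\<Prod>p\<in>primes_in X Y. measure (?U p) (?far p))"
    by (simp add: measure_pmf.emeasure_eq_measure prod_ennreal)
  also have "\<dots> \<le> ennreal (\<Prod>p\<in>primes_in X Y. 1 - indicator (frac_below c p) x / real p)"
    by (intro ennreal_leI prod_mono conjI measure_nonneg prob_uniform_far_le pos x)
  also have "\<dots> \<le> ennreal (1 / (1 + frac_weight c (primes_in X Y) x))"
    unfolding frac_weight_def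
    by (intro ennreal_leI prod_one_minus_le_inverse_one_plus_sum finite_primes_in)
      (use pos in \<open>auto simp: indicator_def Suc_le_eq\<close>)
  finally show ?thesis .
qed

lemma integral_measure_Omega_le_integral:
  fixes g :: "real \<Rightarrow> real"
  assumes g: "integrable lborel g" "\<And>x. 0 \<le> g x"
    and dominated: "\<And>x. 0 \<le> x \<Longrightarrow> x < 1 \<Longrightarrow>
      emeasure seq_space {a \<in> space seq_space. x \<in> Omega c X Y a} \<le> ennreal (g x)"
  shows "(\<integral>a. measure lborel (Omega c X Y a) \<partial>seq_space) \<le> (\<integral>x. g x \<partial>lborel)"
proof -
  have finite: "emeasure lborel (Omega c X Y a) \<noteq> \<top>" for a
    by (rule neq_top_trans[OF _ emeasure_Omega_le_1]) simp
  have outside: "{a \<in> space seq_space. x \<in> Omega c X Y a} = {}" if "x \<notin> {0..1}" for x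
    using that by (auto simp: Omega_def)
  have "AE x in lborel. emeasure seq_space {a \<in> space seq_space. x \<in> Omega c X Y a} \<le> ennreal (g x)"
    using AE_lborel_singleton[of 1]
  proof eventually_elim
    case (elim x)
    then show ?case
      by (cases "x \<in> {0..1}") (auto simp: outside dominated)
  qed
  then have "(\<integral>\<^sup>+x. emeasure seq_space {a \<in> space seq_space. x \<in> Omega c X Y a} \<partial>lborel) \<le>
      (\<integral>\<^sup>+x. ennreal (g x) \<partial>lborel)"
    by (rule nn_integral_mono_AE)
  then have "(\<integral>\<^sup>+a. ennreal (measure lborel (Omega c X Y a)) \<partial>seq_space) \<le> ennreal (\<integral>x. g x \<partial>lborel)"
    using g by (simp add: emeasure_eq_ennreal_measure[OF finite, symmetric] nn_integral_emeasure_Omega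
        nn_integral_eq_integral)
  then show ?thesis
    using g by (simp add: nn_integral_eq_integral integrable_measure_Omega integral_nonneg)
qed

lemma integral_measure_Omega_le_deviation:
  assumes c: "0 < c" "c \<le> 1" and H: "H X Y > 0"
  defines "\<mu> \<equiv> c * H X Y"
  shows "(\<integral>a. measure lborel (Omega c X Y a) \<partial>seq_space) \<le>
    4 / \<mu>\<^sup>2 * (\<integral>x. indicator {0..<1} x * (frac_weight c (primes_in X Y) x - \<mu>)\<^sup>2 \<partial>lborel) + 2 / \<mu>"
proof -
  let ?S = "frac_weight c (primes_in X Y)"
  define g where "g x = 4 / \<mu>\<^sup>2 * (indicator {0..<1} x * (?S x - \<mu>)\<^sup>2) + 2 / \<mu> * indicator {0..<1} x" for x
  have \<mu>: "\<mu> > 0"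
    using c H by (simp add: \<mu>_def)
  have "c * (\<Sum>p\<in>primes_in X Y. 1 / real p) = \<mu>"
    by (simp add: \<mu>_def H_def primes_in_def)
  moreover have "p \<in> primes_in X Y \<Longrightarrow> prime p" for p
    by (simp add: primes_in_def)
  ultimately have deviation: "integrable lborel (\<lambda>x. indicator {0..<1} x * (?S x - \<mu>)\<^sup>2)"
    using frac_weight_variance_le(1)[OF finite_primes_in[of X Y] _ less_imp_le[OF c(1)] c(2)] by simp
  have unit: "integrable lborel (indicator {0..<1::real} :: real \<Rightarrow> real)"
    by (intro integrable_real_indicator) auto
  have g_integrable: "integrable lborel g"
    unfolding g_def by (intro Bochner_Integration.integrable_add integrable_mult_right deviation unit)
  have "(\<integral>a. measure lborel (Omega c X Y a) \<partial>seq_space) \<le> (\<integral>x. g x \<partial>lborel)"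
  proof (rule integral_measure_Omega_le_integral[OF g_integrable])
    show "0 \<le> g x" for x
      using \<mu> by (simp add: g_def)
    fix x :: real assume x: "0 \<le> x" "x < 1"
    have "emeasure seq_space {a \<in> space seq_space. x \<in> Omega c X Y a} \<le> ennreal (1 / (1 + ?S x))"
      by (rule emeasure_mem_Omega_le[OF x])
    also have "\<dots> \<le> ennreal (g x)"
      using inverse_one_plus_le_deviation[OF frac_weight_nonneg \<mu>] x by (simp add: g_def ennreal_leI)
    finally show "emeasure seq_space {a \<in> space seq_space. x \<in> Omega c X Y a} \<le> ennreal (g x)" .
  qed
  also have "(\<integral>x. g x \<partial>lborel) = 4 / \<mu>\<^sup>2 * (\<integral>x. indicator {0..<1} x * (?S x - \<mu>)\<^sup>2 \<partial>lborel) + 2 / \<mu>"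
    unfolding g_def using deviation unit by simp
  finally show ?thesis .
qed

lemma integral_measure_Omega_le:
  assumes c: "0 < c" "c \<le> 1" and H: "H X Y > 0"
  shows "(\<integral>a. measure lborel (Omega c X Y a) \<partial>seq_space) \<le> 4 * (H X Y + 1) / (c * (H X Y)\<^sup>2) + 2 / (c * H X Y)"
proof -
  let ?J = "primes_in X Y"
  have primes: "p \<in> ?J \<Longrightarrow> prime p" for p
    by (simp add: primes_in_def)
  have H_eq: "H X Y = (\<Sum>p\<in>?J. 1 / real p)"
    by (simp add: H_def primes_in_def)
  have "(\<integral>a. measure lborel (Omega c X Y a) \<partial>seq_space) \<le>
      4 / (c * H X Y)\<^sup>2 * (\<integral>x. indicator {0..<1} x * (frac_weight c ?J x - c * H X Y)\<^sup>2 \<partial>lborel) + 2 / (c * H X Y)"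
    using c H by (intro integral_measure_Omega_le_deviation) auto
  also have "\<dots> \<le> 4 / (c * H X Y)\<^sup>2 * (c * (\<Sum>p\<in>?J. 1 / (real p)\<^sup>2) * (H X Y + 1)) + 2 / (c * H X Y)"
    using frac_weight_variance_le(2)[OF finite_primes_in[of X Y] primes, of c] c
    by (intro add_right_mono mult_left_mono) (simp_all add: H_eq)
  also have "\<dots> \<le> 4 / (c * H X Y)\<^sup>2 * (c * 1 * (H X Y + 1)) + 2 / (c * H X Y)"
    using sum_inverse_squares_le_1[OF finite_primes_in] c H
    by (intro add_right_mono mult_left_mono) (auto simp: primes_in_def prime_ge_2_nat)
  also have "\<dots> = 4 * (H X Y + 1) / (c * (H X Y)\<^sup>2) + 2 / (c * H X Y)"
    using c H by (simp add: power2_eq_square field_simps)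
  finally show ?thesis .
qed

theorem lemma2p1:
  fixes c :: real
  assumes "0 < c" and "c \<le> 1/2"
  shows "\<exists>C\<ge>0. \<forall>X Y::real. 1 \<le> X \<and> X < Y \<and> H X Y > 0 \<longrightarrow>
           integrable seq_space (\<lambda>a. measure lborel (Omega c X Y a)) \<and>
           (\<integral>a. measure lborel (Omega c X Y a) \<partial>seq_space) \<le> C / H X Y"
proof (intro exI[of _ "10 / c"] conjI allI impI)
  show "0 \<le> 10 / c"
    using assms by simp
  fix X Y :: real
  assume "1 \<le> X \<and> X < Y \<and> H X Y > 0"
  then have H: "H X Y > 0"
    by simp
  show "integrable seq_space (\<lambda>a. measure lborel (Omega c X Y a))"
    by (rule integrable_measure_Omega)
  show "(\<integral>a. measure lborel (Omega c X Y a) \<partial>seq_space) \<le> 10 / c / H X Y"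
  proof (cases "H X Y \<le> 1")
    case True
    have "c * H X Y \<le> 1 * 1"
      using assms H True by (intro mult_mono) auto
    then have "1 \<le> 10 / c / H X Y"
      using assms H by (simp add: field_simps)
    with integral_measure_Omega_le_1 show ?thesis
      by (rule order_trans)
  next
    case False
    have "4 * (H X Y + 1) / (c * (H X Y)\<^sup>2) + 2 / (c * H X Y) = (4 * (H X Y + 1) + 2 * H X Y) / (c * (H X Y)\<^sup>2)"
      using assms H by (simp add: field_simps power2_eq_square)
    also have "\<dots> \<le> 10 * H X Y / (c * (H X Y)\<^sup>2)"
      using assms False by (intro divide_right_mono) auto
    also have "\<dots> = 10 / c / H X Y"
      using H by (simp add: power2_eq_square)
    finally show ?thesis
      using integral_measure_Omega_le[of c X Y] assms H by simp
  qed
qed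

end
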